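(* Let $n\ge 3$ be an integer and let $\{D_I\}_{I\in\binom{[n]}{n-1}}$ be a family of positive real numbers, where $[n]=\{1,\dots,n\}$; write $D_{\hat i}=D_{[n]\setminus\{i\}}$ for $i\in[n]$. There exists a positive-weighted (simple, finite) graph $\mathcal G=(G,w)$ with vertex set exactly $V(G)=[n]$ such that $D_{\hat i}(\mathcal G)=D_{\hat i}$ for all $i\in[n]$ if and only if the following two conditions hold: (i) $(n-2)D_{\hat i}\le \sum_{j\in[n]\setminus\{i\}} D_{\hat j}$ for every $i\in[n]$; (ii) if the maximum of $\{D_{\hat i}\}_{i\in[n]}$ is attained by at least two indices $i$, then all the inequalities in (i) are strict.
   Context: All graphs are simple and finite. A positive-weighted graph $\mathcal G=(G,w)$ is a graph $G$ with a function $w:E(G)\to\mathbb R_{>0}$; for a subgraph $G'$, $w(G')$ is the sum of the weights of the edges of $G'$. For distinct vertices $i_1,\dots,i_k$ of $G$, $D_{\{i_1,\dots,i_k\}}(\mathcal G)$ is the minimum of $w(R)$ over all connected subgraphs $R$ of $G$ whose vertex set contains $i_1,\dots,i_k$ (equality $D_{\hat i}(\mathcal G)=D_{\hat i}$ in particular requires such subgraphs to exist). We write $D_{\hat i}(\mathcal G)=D_{[n]\setminus\{i\}}(\mathcal G)$. *)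

theory Defs
  imports Complex_Main
begin

definition simple_graph :: "'a set \<Rightarrow> 'a set set \<Rightarrow> bool" where
  "simple_graph V E \<longleftrightarrow> finite V \<and> (\<forall>e\<in>E. e \<subseteq> V \<and> card e = 2)"

definition pos_weighted_graph :: "'a set \<Rightarrow> 'a set set \<Rightarrow> ('a set \<Rightarrow> real) \<Rightarrow> bool" where
  "pos_weighted_graph V E w \<longleftrightarrow> simple_graph V E \<and> (\<forall>e\<in>E. w e > 0)"

definition subgraph :: "'a set \<Rightarrow> 'a set set \<Rightarrow> 'a set \<Rightarrow> 'a set set \<Rightarrow> bool" where
  "subgraph S F V E \<longleftrightarrow> S \<subseteq> V \<and> F \<subseteq> E \<and> (\<forall>e\<in>F. e \<subseteq> S)"

definition connected_graph :: "'a set \<Rightarrow> 'a set set \<Rightarrow> bool" where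
  "connected_graph S F \<longleftrightarrow> S \<noteq> {} \<and>
     (\<forall>u\<in>S. \<forall>v\<in>S. (u, v) \<in> {(a, b). {a, b} \<in> F}\<^sup>*)"

(* D_X(G) = d : the minimum of w(R) over connected subgraphs R of G whose vertex
   set contains X exists and equals d *)
definition min_conn_weight :: "'a set \<Rightarrow> 'a set set \<Rightarrow> ('a set \<Rightarrow> real) \<Rightarrow> 'a set \<Rightarrow> real \<Rightarrow> bool" where
  "min_conn_weight V E w X d \<longleftrightarrow>
     (\<exists>S F. subgraph S F V E \<and> connected_graph S F \<and> X \<subseteq> S \<and> sum w F = d) \<and>
     (\<forall>S F. subgraph S F V E \<and> connected_graph S F \<and> X \<subseteq> S \<longrightarrow> d \<le> sum w F)"

end

theory Submission
  imports Defs
begin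

text \<open>
Let \<open>M\<close> be the least weight of a connected spanning subgraph, so that \<open>D\<^sub>i \<le> M\<close> for all \<open>i\<close>.
Rooting an optimal spanning subgraph at \<open>i\<close>, the other vertices \<open>j\<close> can be given distinct incident
edges \<open>e\<^sub>j\<close> (the edges of a search tree). Adding \<open>e\<^sub>j\<close> to an optimal subgraph for \<open>D\<^sub>j\<close> spans, so
\<open>M \<le> D\<^sub>j + w e\<^sub>j\<close>; summing over \<open>j \<noteq> i\<close> gives \<open>(n - 1) M \<le> (\<Sum>j\<noteq>i. D\<^sub>j) + M\<close>, hence (i). If (i) is
an equality at \<open>i\<close>, then \<open>D\<^sub>i = M\<close> and every slack \<open>D\<^sub>j + w e\<^sub>j - M\<close> vanishes, so \<open>D\<^sub>j < D\<^sub>i\<close> for \<open>j \<noteq> i\<close>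
and the maximum is attained only once.

Conversely, let \<open>c\<close> maximise \<open>D\<close>, let \<open>d\<close> maximise it on the other vertices, and put
\<open>T = (\<Sum>j\<noteq>c. D\<^sub>j) / (n - 2)\<close>. Take the star at \<open>c\<close> with weights \<open>T - D\<^sub>j\<close>, together with the star at \<open>d\<close>
on the vertices other than \<open>c\<close> whose weights are those of the first star raised by \<open>(D\<^sub>c - D\<^sub>d) / (n - 2)\<close>.
Conditions (i) and (ii) make all weights positive. The first star without its
leaf \<open>i\<close> weighs \<open>D\<^sub>i\<close>, the second star weighs \<open>D\<^sub>c\<close>, and these are optimal because every edge at a
vertex \<open>k \<noteq> c\<close> weighs at least the edge \<open>{c, k}\<close>.
\<close>

definition realisable :: "'a set \<Rightarrow> ('a \<Rightarrow> real) \<Rightarrow> bool" where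
  "realisable V D \<longleftrightarrow>
     (\<exists>E w. pos_weighted_graph V E w \<and> (\<forall>i\<in>V. min_conn_weight V E w (V - {i}) (D i)))"

definition weight_conditions :: "'a set \<Rightarrow> ('a \<Rightarrow> real) \<Rightarrow> bool" where
  "weight_conditions V D \<longleftrightarrow>
     (\<forall>i\<in>V. (real (card V) - 2) * D i \<le> sum D (V - {i})) \<and>
     (2 \<le> card {i\<in>V. D i = Max (D ` V)} \<longrightarrow>
        (\<forall>i\<in>V. (real (card V) - 2) * D i < sum D (V - {i})))"

section \<open>Connected subgraphs\<close>

definition edge_rel :: "'a set set \<Rightarrow> ('a \<times> 'a) set" where
  "edge_rel F = {(a, b). {a, b} \<in> F}"

definition star_edges :: "'a \<Rightarrow> 'a set \<Rightarrow> 'a set set" where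
  "star_edges c A = (\<lambda>j. {c, j}) ` A"

lemma connected_graph_iff_edge_rel:
  "connected_graph S F \<longleftrightarrow> S \<noteq> {} \<and> (\<forall>u\<in>S. \<forall>v\<in>S. (u, v) \<in> (edge_rel F)\<^sup>*)"
  by (simp add: connected_graph_def edge_rel_def)

lemma edge_rel_mono: "F \<subseteq> G \<Longrightarrow> edge_rel F \<subseteq> edge_rel G"
  by (auto simp: edge_rel_def)

lemma sym_rtrancl_edge_rel: "sym ((edge_rel F)\<^sup>*)"
  by (rule sym_rtrancl) (auto simp: sym_def edge_rel_def insert_commute)

lemma connected_graphI_hub:
  assumes "z \<in> S" and "\<And>u. u \<in> S \<Longrightarrow> (u, z) \<in> (edge_rel F)\<^sup>*"
  shows "connected_graph S F"
  unfolding connected_graph_iff_edge_rel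
proof (intro conjI ballI)
  show "S \<noteq> {}" using assms(1) by blast
  fix u v assume "u \<in> S" "v \<in> S"
  have "(z, v) \<in> (edge_rel F)\<^sup>*"
    using sym_rtrancl_edge_rel assms(2)[OF \<open>v \<in> S\<close>] by (rule symD)
  with assms(2)[OF \<open>u \<in> S\<close>] show "(u, v) \<in> (edge_rel F)\<^sup>*" by (rule rtrancl_trans)
qed

lemma connected_graph_Un:
  assumes "connected_graph S F" "connected_graph S' F'" "z \<in> S" "z \<in> S'"
  shows "connected_graph (S \<union> S') (F \<union> F')"
proof (rule connected_graphI_hub)
  show "z \<in> S \<union> S'" using assms(3) by blast
  have mono: "(edge_rel F)\<^sup>* \<subseteq> (edge_rel (F \<union> F'))\<^sup>*" "(edge_rel F')\<^sup>* \<subseteq> (edge_rel (F \<union> F'))\<^sup>*"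
    by (intro rtrancl_mono edge_rel_mono; blast)+
  fix u assume "u \<in> S \<union> S'"
  then have "(u, z) \<in> (edge_rel F)\<^sup>* \<or> (u, z) \<in> (edge_rel F')\<^sup>*"
    using assms unfolding connected_graph_iff_edge_rel by blast
  then show "(u, z) \<in> (edge_rel (F \<union> F'))\<^sup>*" using mono by blast
qed

lemma connected_graph_star:
  assumes "c \<in> A"
  shows "connected_graph A (star_edges c (A - {c}))"
proof (rule connected_graphI_hub[OF assms])
  fix u assume "u \<in> A"
  show "(u, c) \<in> (edge_rel (star_edges c (A - {c})))\<^sup>*"
  proof (cases "u = c")
    case False
    have "{u, c} = {c, u}" by (rule insert_commute)
    then have "(u, c) \<in> edge_rel (star_edges c (A - {c}))"
      using False \<open>u \<in> A\<close> by (auto simp: edge_rel_def star_edges_def)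
    then show ?thesis by blast
  qed simp
qed

lemma sum_star_edges: "sum w (star_edges c A) = (\<Sum>j\<in>A. w {c, j})"
  unfolding star_edges_def
  by (subst sum.reindex) (auto simp: inj_on_def doubleton_eq_iff)

lemma connected_graph_crossing_edge:
  assumes "connected_graph S F" "\<forall>e\<in>F. e \<subseteq> S" "r \<in> R" "R \<subset> S"
  obtains a b where "a \<in> R" "b \<in> S - R" "{a, b} \<in> F"
proof -
  have leave: "y \<notin> R \<longrightarrow> (\<exists>a\<in>R. \<exists>b. b \<notin> R \<and> {a, b} \<in> F)"
    if "(r, y) \<in> (edge_rel F)\<^sup>*" for y
    using that
  proof (induction rule: rtrancl_induct)
    case (step y z)
    then show ?case unfolding edge_rel_def by blast
  qed (use assms(3) in blast)
  obtain v where "v \<in> S - R" using assms(4) by blast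
  moreover from this have "(r, v) \<in> (edge_rel F)\<^sup>*"
    using assms(1,3,4) unfolding connected_graph_iff_edge_rel by blast
  ultimately obtain a b where "a \<in> R" "b \<notin> R" "{a, b} \<in> F"
    using leave by blast
  moreover have "b \<in> S" using assms(2) \<open>{a, b} \<in> F\<close> by blast
  ultimately show thesis by (intro that) auto
qed

lemma connected_graph_incident_edge_inj:
  assumes conn: "connected_graph S F" and "finite S" and edges: "\<forall>e\<in>F. e \<subseteq> S" and "r \<in> S"
  obtains p where "inj_on p (S - {r})" "\<forall>k\<in>S - {r}. p k \<in> F \<and> k \<in> p k"
proof -
  \<comment> \<open>Grow the set \<open>R\<close> of reached vertices along crossing edges; the invariant \<open>p k \<subseteq> R\<close>
     makes the edge of a newly reached vertex different from all edges chosen before.\<close>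
  have "\<exists>p. inj_on p (S - {r}) \<and> (\<forall>k\<in>S - {r}. p k \<in> F \<and> k \<in> p k)"
    if "r \<in> R" "R \<subseteq> S" "inj_on p (R - {r})" "\<forall>k\<in>R - {r}. p k \<in> F \<and> k \<in> p k \<and> p k \<subseteq> R"
    for R p
    using that
  proof (induction "card (S - R)" arbitrary: R p rule: less_induct)
    case less
    show ?case
    proof (cases "R = S")
      case True
      then show ?thesis using less.prems by blast
    next
      case False
      then obtain a b where ab: "a \<in> R" "b \<in> S - R" "{a, b} \<in> F"
        using connected_graph_crossing_edge[OF conn edges less.prems(1)] less.prems(2) by blast
      let ?R = "insert b R" and ?p = "p(b := {a, b})"
      have "?p ` (R - {r}) = p ` (R - {r})" using ab(2) by auto
      moreover have "{a, b} \<notin> p ` (R - {r})" using less.prems(4) ab(2) by auto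
      ultimately have inj: "inj_on ?p (?R - {r})"
        using less.prems(3) ab(2) \<open>r \<in> R\<close> inj_on_insert[of ?p b "R - {r}"]
        by (auto simp: insert_Diff_if inj_on_def)
      have incident: "\<forall>k\<in>?R - {r}. ?p k \<in> F \<and> k \<in> ?p k \<and> ?p k \<subseteq> ?R"
        using less.prems(4) ab by auto
      have "card (S - ?R) < card (S - R)"
        using \<open>finite S\<close> ab(2) by (intro psubset_card_mono) auto
      moreover have "r \<in> ?R" "?R \<subseteq> S" using less.prems(1,2) ab(2) by auto
      ultimately show ?thesis using less.hyps inj incident by blast
    qed
  qed
  from this[of "{r}" "\<lambda>_. {}"] show thesis
    using that \<open>r \<in> S\<close> by auto
qed

lemma sum_inj_edge_choice_le:
  fixes w :: "'a set \<Rightarrow> 'b::ordered_comm_monoid_add"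
  assumes "finite F" "inj_on p A" "\<forall>k\<in>A. p k \<in> F" "\<forall>e\<in>F. 0 \<le> w e"
  shows "sum (w \<circ> p) A \<le> sum w F"
proof -
  have "sum (w \<circ> p) A = sum w (p ` A)" by (simp add: sum.reindex assms(2))
  also have "\<dots> \<le> sum w F" using assms(1,3,4) by (intro sum_mono2) auto
  finally show ?thesis .
qed

lemma connected_graph_sum_le_weight:
  fixes w :: "'a set \<Rightarrow> 'b::ordered_comm_monoid_add" and lb :: "'a \<Rightarrow> 'b"
  assumes "connected_graph S F" "finite S" "\<forall>e\<in>F. e \<subseteq> S" "r \<in> S"
    and "\<forall>e\<in>F. 0 \<le> w e" and "\<And>e k. e \<in> F \<Longrightarrow> k \<in> e \<Longrightarrow> k \<noteq> r \<Longrightarrow> lb k \<le> w e"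
  shows "sum lb (S - {r}) \<le> sum w F"
proof -
  obtain p where p: "inj_on p (S - {r})" "\<forall>k\<in>S - {r}. p k \<in> F \<and> k \<in> p k"
    using connected_graph_incident_edge_inj[OF assms(1-4)] .
  have "finite F" using assms(2,3) finite_subset[of F "Pow S"] by blast
  have "sum lb (S - {r}) \<le> sum (w \<circ> p) (S - {r})"
    using p(2) assms(6) by (intro sum_mono) auto
  also have "\<dots> \<le> sum w F"
    using \<open>finite F\<close> p assms(5) by (intro sum_inj_edge_choice_le) auto
  finally show ?thesis .
qed

section \<open>Necessity\<close>

lemma slack_sum_ge:
  fixes D q :: "'a \<Rightarrow> real"
  assumes "finite I" "\<And>j. j \<in> I \<Longrightarrow> M \<le> D j + q j" "sum q I \<le> M"
  shows "(real (card I) - 1) * M \<le> sum D I"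
proof -
  have "real (card I) * M = (\<Sum>j\<in>I. M)" by simp
  also have "\<dots> \<le> (\<Sum>j\<in>I. D j + q j)" using assms(2) by (rule sum_mono)
  also have "\<dots> \<le> sum D I + M" using assms(3) by (simp add: sum.distrib)
  finally show ?thesis by (simp add: algebra_simps)
qed

lemma slack_tight_imp_less:
  fixes D q :: "'a \<Rightarrow> real"
  assumes "finite I" "\<And>j. j \<in> I \<Longrightarrow> M \<le> D j + q j" "sum q I \<le> M"
    and "sum D I \<le> (real (card I) - 1) * M" "j \<in> I" "0 < q j"
  shows "D j < M"
proof -
  have "D j + q j - M \<le> (\<Sum>k\<in>I. D k + q k - M)"
    using assms(1,2,5) by (intro member_le_sum) auto
  also have "\<dots> = sum D I + sum q I - real (card I) * M"
    by (simp add: sum.distrib sum_subtractf)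
  also have "\<dots> \<le> 0" using assms(3,4) by (simp add: algebra_simps)
  finally show ?thesis using assms(6) by simp
qed

locale realised_family =
  fixes V :: "'a set" and E :: "'a set set" and w :: "'a set \<Rightarrow> real" and D :: "'a \<Rightarrow> real"
  assumes pos_weighted: "pos_weighted_graph V E w"
    and realised: "\<And>i. i \<in> V \<Longrightarrow> min_conn_weight V E w (V - {i}) (D i)"
    and three_le_card: "3 \<le> card V"
begin

lemma finite_vertices: "finite V"
  using pos_weighted by (simp add: pos_weighted_graph_def simple_graph_def)

lemma edge_subset: "e \<in> E \<Longrightarrow> e \<subseteq> V"
  and edge_card: "e \<in> E \<Longrightarrow> card e = 2"
  and weight_pos: "e \<in> E \<Longrightarrow> 0 < w e"
  using pos_weighted by (auto simp: pos_weighted_graph_def simple_graph_def)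

lemma finite_edges: "finite E"
  using finite_vertices edge_subset finite_subset[of E "Pow V"] by blast

lemma realised_by:
  assumes "i \<in> V"
  obtains S F where "subgraph S F V E" "connected_graph S F" "V - {i} \<subseteq> S" "sum w F = D i"
  using realised[OF assms] by (auto simp: min_conn_weight_def)

lemma realised_le:
  "i \<in> V \<Longrightarrow> subgraph S F V E \<Longrightarrow> connected_graph S F \<Longrightarrow> V - {i} \<subseteq> S \<Longrightarrow> D i \<le> sum w F"
  using realised by (auto simp: min_conn_weight_def)

definition spanning_subgraphs :: "'a set set set" where
  "spanning_subgraphs = {F. F \<subseteq> E \<and> connected_graph V F}"

definition min_spanning_weight :: real where
  "min_spanning_weight = Min (sum w ` spanning_subgraphs)"

lemma ex_vertex_outside:
  assumes "finite A" "card A < 3"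
  shows "\<exists>k. k \<in> V - A"
proof -
  have "0 < card (V - A)"
    using three_le_card assms diff_card_le_card_Diff[of A V] by linarith
  then show ?thesis by (auto simp: card_gt_0_iff)
qed

lemma spanning_subgraphs_nonempty: "spanning_subgraphs \<noteq> {}"
proof -
  obtain i where i: "i \<in> V" using ex_vertex_outside[of "{}"] by auto
  obtain j where j: "j \<in> V - {i}" using ex_vertex_outside[of "{i}"] by auto
  obtain k where k: "k \<in> V - {i, j}"
  proof -
    have "card {i, j} < 3" by (cases "i = j") auto
    then show thesis using ex_vertex_outside[of "{i, j}"] that by blast
  qed
  obtain S F where SF: "subgraph S F V E" "connected_graph S F" "V - {i} \<subseteq> S"
    using realised_by[OF i] .
  obtain S' F' where SF': "subgraph S' F' V E" "connected_graph S' F'" "V - {j} \<subseteq> S'"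
    using realised_by[of j] j by blast
  have "connected_graph (S \<union> S') (F \<union> F')"
    using SF(2,3) SF'(2,3) k by (intro connected_graph_Un[of _ _ _ _ k]) auto
  moreover have "S \<union> S' = V" using SF SF' j by (auto simp: subgraph_def)
  moreover have "F \<union> F' \<subseteq> E" using SF(1) SF'(1) by (auto simp: subgraph_def)
  ultimately have "F \<union> F' \<in> spanning_subgraphs" by (simp add: spanning_subgraphs_def)
  then show ?thesis by blast
qed

lemma min_spanning_weight_le:
  "F \<subseteq> E \<Longrightarrow> connected_graph V F \<Longrightarrow> min_spanning_weight \<le> sum w F"
  unfolding min_spanning_weight_def spanning_subgraphs_def
  using finite_edges by (intro Min_le) auto

lemma min_spanning_weight_attained:
  obtains F where "F \<subseteq> E" "connected_graph V F" "sum w F = min_spanning_weight"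
proof -
  have "finite spanning_subgraphs"
    using finite_edges by (simp add: spanning_subgraphs_def)
  then have "min_spanning_weight \<in> sum w ` spanning_subgraphs"
    unfolding min_spanning_weight_def using spanning_subgraphs_nonempty by (intro Min_in) auto
  then show thesis using that by (auto simp: spanning_subgraphs_def)
qed

lemma realised_le_min_spanning_weight:
  assumes "i \<in> V"
  shows "D i \<le> min_spanning_weight"
proof -
  obtain F where F: "F \<subseteq> E" "connected_graph V F" "sum w F = min_spanning_weight"
    by (rule min_spanning_weight_attained)
  then have "subgraph V F V E" using edge_subset by (auto simp: subgraph_def)
  from realised_le[OF assms this F(2)] show ?thesis using F(3) by simp
qed

lemma edgeE:
  assumes "e \<in> E" "j \<in> e"
  obtains y where "e = {j, y}" "y \<noteq> j" "y \<in> V"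
proof -
  obtain x y where "e = {x, y}" "x \<noteq> y" using edge_card[OF assms(1)] by (auto simp: card_2_iff)
  then have "e = {j, if x = j then y else x}" "(if x = j then y else x) \<noteq> j"
    using assms(2) by auto
  then show thesis using that edge_subset[OF assms(1)] by blast
qed

lemma min_spanning_weight_le_add_edge:
  assumes "j \<in> V" "e \<in> E" "j \<in> e"
  shows "min_spanning_weight \<le> D j + w e"
proof -
  obtain S F where SF: "subgraph S F V E" "connected_graph S F" "V - {j} \<subseteq> S" "sum w F = D j"
    using realised_by[OF assms(1)] .
  obtain y where y: "e = {j, y}" "y \<noteq> j" "y \<in> V" using edgeE[OF assms(2,3)] .
  have "connected_graph e {e}"
    using connected_graph_star[of j e] y by (simp add: star_edges_def insert_Diff_if)
  then have "connected_graph (S \<union> e) (F \<union> {e})"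
    using SF(2,3) y by (intro connected_graph_Un[of _ _ _ _ y]) auto
  moreover have "S \<union> e = V" using SF(1,3) y assms(1) by (auto simp: subgraph_def)
  moreover have "F \<union> {e} \<subseteq> E" using SF(1) assms(2) by (auto simp: subgraph_def)
  ultimately have "min_spanning_weight \<le> sum w (insert e F)"
    using min_spanning_weight_le by simp
  also have "\<dots> \<le> sum w F + w e"
    using finite_subset[OF _ finite_edges] SF(1) weight_pos[OF assms(2)]
    by (auto simp: subgraph_def sum.insert_if)
  finally show ?thesis using SF(4) by simp
qed

lemma slack_weightsE:
  assumes "i \<in> V"
  obtains q where "\<And>j. j \<in> V - {i} \<Longrightarrow> 0 < q j \<and> min_spanning_weight \<le> D j + q j"
    and "sum q (V - {i}) \<le> min_spanning_weight"
proof -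
  obtain F where F: "F \<subseteq> E" "connected_graph V F" "sum w F = min_spanning_weight"
    by (rule min_spanning_weight_attained)
  obtain p where p: "inj_on p (V - {i})" "\<forall>k\<in>V - {i}. p k \<in> F \<and> k \<in> p k"
    using connected_graph_incident_edge_inj[OF F(2) finite_vertices _ assms] F(1) edge_subset
    by blast
  have "sum (w \<circ> p) (V - {i}) \<le> sum w F"
    using F(1) finite_subset[OF _ finite_edges] p weight_pos
    by (intro sum_inj_edge_choice_le) (auto intro!: less_imp_le weight_pos)
  moreover have "0 < w (p j) \<and> min_spanning_weight \<le> D j + w (p j)" if "j \<in> V - {i}" for j
    using p(2) that F(1) weight_pos min_spanning_weight_le_add_edge by blast
  ultimately show thesis using that[of "w \<circ> p"] F(3) by simp
qed

lemma real_card_Diff_vertex: "i \<in> V \<Longrightarrow> real (card (V - {i})) - 1 = real (card V) - 2"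
  using finite_vertices three_le_card by (simp add: of_nat_diff)

lemma min_spanning_weight_bound:
  assumes "i \<in> V"
  shows "(real (card V) - 2) * min_spanning_weight \<le> sum D (V - {i})"
proof -
  obtain q where "\<And>j. j \<in> V - {i} \<Longrightarrow> 0 < q j \<and> min_spanning_weight \<le> D j + q j"
    "sum q (V - {i}) \<le> min_spanning_weight"
    using slack_weightsE[OF assms] by blast
  from slack_sum_ge[of "V - {i}", OF _ this(1)[THEN conjunct2] this(2)] show ?thesis
    using finite_vertices real_card_Diff_vertex[OF assms] by simp
qed

lemma weight_condition:
  assumes "i \<in> V"
  shows "(real (card V) - 2) * D i \<le> sum D (V - {i})"
proof -
  have "0 \<le> real (card V) - 2" using three_le_card by simp
  then have "(real (card V) - 2) * D i \<le> (real (card V) - 2) * min_spanning_weight"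
    by (rule mult_left_mono[OF realised_le_min_spanning_weight[OF assms]])
  with min_spanning_weight_bound[OF assms] show ?thesis by linarith
qed

lemma tight_imp_strict_max:
  assumes "i \<in> V" "sum D (V - {i}) \<le> (real (card V) - 2) * D i" "j \<in> V - {i}"
  shows "D j < D i"
proof -
  obtain q where q: "\<And>j. j \<in> V - {i} \<Longrightarrow> 0 < q j \<and> min_spanning_weight \<le> D j + q j"
    "sum q (V - {i}) \<le> min_spanning_weight"
    using slack_weightsE[OF assms(1)] by blast
  have "(real (card V) - 2) * min_spanning_weight \<le> (real (card V) - 2) * D i"
    using assms(2) min_spanning_weight_bound[OF assms(1)] by linarith
  moreover have "0 < real (card V) - 2" using three_le_card by simp
  ultimately have "D i = min_spanning_weight"
    using realised_le_min_spanning_weight[OF assms(1)] by (simp add: mult_le_cancel_left_pos)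
  moreover have "sum D (V - {i}) \<le> (real (card (V - {i})) - 1) * min_spanning_weight"
    unfolding real_card_Diff_vertex[OF assms(1)] using assms(2) calculation by simp
  then have "D j < min_spanning_weight"
    using finite_vertices q assms(3)
    by (intro slack_tight_imp_less[of "V - {i}" min_spanning_weight D q]) auto
  ultimately show ?thesis by simp
qed

end

lemma argmax_eq_singleton:
  fixes D :: "'a \<Rightarrow> 'b::linorder"
  assumes "finite V" "i \<in> V" "\<And>j. j \<in> V - {i} \<Longrightarrow> D j < D i"
  shows "{j\<in>V. D j = Max (D ` V)} = {i}"
proof -
  have "Max (D ` V) = D i"
    using assms by (intro Max_eqI) (auto intro: less_imp_le)
  then show ?thesis using assms(2,3) by force
qed

lemma realisable_imp_weight_conditions:
  assumes "3 \<le> card V" "realisable V D"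
  shows "weight_conditions V D"
proof -
  obtain E w where "pos_weighted_graph V E w" "\<forall>i\<in>V. min_conn_weight V E w (V - {i}) (D i)"
    using assms(2) by (auto simp: realisable_def)
  then interpret realised_family V E w D
    using assms(1) by unfold_locales auto
  have "(real (card V) - 2) * D i < sum D (V - {i})"
    if "2 \<le> card {i\<in>V. D i = Max (D ` V)}" "i \<in> V" for i
  proof (rule ccontr)
    assume "\<not> ?thesis"
    then have "{j\<in>V. D j = Max (D ` V)} = {i}"
      using finite_vertices \<open>i \<in> V\<close> tight_imp_strict_max
      by (intro argmax_eq_singleton) auto
    with that(1) show False by simp
  qed
  then show ?thesis using weight_condition by (auto simp: weight_conditions_def)
qed

section \<open>Sufficiency\<close>

locale double_star =
  fixes V :: "'a set" and c d :: 'a and a b :: "'a \<Rightarrow> real"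
  assumes finite_V: "finite V" and c_in: "c \<in> V" and d_in: "d \<in> V" and c_ne_d: "c \<noteq> d"
    and a_pos: "\<And>j. j \<in> V - {c} \<Longrightarrow> 0 < a j"
    and a_le_b: "\<And>j. j \<in> V - {c, d} \<Longrightarrow> a j \<le> b j"
    and a_hub_le_b: "\<And>j. j \<in> V - {c, d} \<Longrightarrow> a d \<le> b j"
    and sum_b_le_sum_a: "sum b (V - {c, d}) \<le> sum a (V - {c})"
begin

definition edges :: "'a set set" where
  "edges = star_edges c (V - {c}) \<union> star_edges d (V - {c, d})"

\<comment> \<open>\<open>the_elem (e - {x})\<close> is the endpoint of the edge \<open>e\<close> other than \<open>x\<close>.\<close>
definition weight :: "'a set \<Rightarrow> real" where
  "weight e = (if c \<in> e then a (the_elem (e - {c})) else b (the_elem (e - {d})))"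

lemma weight_star_c: "j \<noteq> c \<Longrightarrow> weight {c, j} = a j"
  by (simp add: weight_def insert_Diff_if)

lemma weight_star_d:
  assumes "j \<notin> {c, d}"
  shows "weight {d, j} = b j"
proof -
  have "c \<notin> {d, j}" "{d, j} - {d} = {j}" using assms c_ne_d by auto
  then show ?thesis by (simp add: weight_def)
qed

lemma sum_weight_star_c: "c \<notin> A \<Longrightarrow> sum weight (star_edges c A) = sum a A"
  unfolding sum_star_edges by (rule sum.cong) (auto intro!: weight_star_c)

lemma sum_weight_star_d: "A \<inter> {c, d} = {} \<Longrightarrow> sum weight (star_edges d A) = sum b A"
  unfolding sum_star_edges by (rule sum.cong) (auto intro!: weight_star_d)

lemma edgesE:
  assumes "e \<in> edges"
  obtains (star_c) j where "j \<in> V - {c}" "e = {c, j}"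
    | (star_d) j where "j \<in> V - {c, d}" "e = {d, j}"
  using assms by (auto simp: edges_def star_edges_def)

lemma pos_weighted: "pos_weighted_graph V edges weight"
proof -
  have "0 < weight e" if "e \<in> edges" for e
    using that
  proof (cases rule: edgesE)
    case (star_d j)
    then show ?thesis using a_pos[of j] a_le_b[of j] weight_star_d[of j] by auto
  qed (use a_pos weight_star_c in auto)
  moreover have "simple_graph V edges"
    using finite_V c_in d_in by (auto simp: simple_graph_def edges_def star_edges_def)
  ultimately show ?thesis by (simp add: pos_weighted_graph_def)
qed

lemma star_c_cheapest:
  assumes "e \<in> edges" "k \<in> e" "k \<noteq> c"
  shows "a k \<le> weight e"
  using assms(1)
proof (cases rule: edgesE)
  case (star_d j)
  then show ?thesis using assms(2) a_le_b[of j] a_hub_le_b[of j] weight_star_d[of j] by auto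
qed (use assms weight_star_c in auto)

lemma sum_a_le_weight:
  assumes "subgraph S F V edges" "connected_graph S F" "c \<in> S"
  shows "sum a (S - {c}) \<le> sum weight F"
  using assms finite_subset[OF _ finite_V] pos_weighted star_c_cheapest
  by (intro connected_graph_sum_le_weight[of S F c])
    (auto simp: subgraph_def pos_weighted_graph_def intro: less_imp_le)

lemma min_conn_weight_vertex:
  assumes "i \<in> V - {c}"
  shows "min_conn_weight V edges weight (V - {i}) (sum a (V - {c, i}))"
  unfolding min_conn_weight_def
proof (intro conjI allI impI)
  let ?F = "star_edges c (V - {c, i})"
  have "subgraph (V - {i}) ?F V edges"
    using assms c_in by (auto simp: subgraph_def edges_def star_edges_def)
  moreover have "V - {i} - {c} = V - {c, i}" by auto
  then have "connected_graph (V - {i}) ?F"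
    using connected_graph_star[of c "V - {i}"] assms c_in by force
  moreover have "sum weight ?F = sum a (V - {c, i})" by (simp add: sum_weight_star_c)
  ultimately show "\<exists>S F. subgraph S F V edges \<and> connected_graph S F \<and> V - {i} \<subseteq> S
      \<and> sum weight F = sum a (V - {c, i})" by blast
next
  fix S F assume SF: "subgraph S F V edges \<and> connected_graph S F \<and> V - {i} \<subseteq> S"
  then have "sum a (V - {c, i}) \<le> sum a (S - {c})"
    using finite_subset[OF _ finite_V] a_pos
    by (intro sum_mono2) (auto simp: subgraph_def intro: less_imp_le)
  also have "\<dots> \<le> sum weight F" using SF assms c_in by (intro sum_a_le_weight) auto
  finally show "sum a (V - {c, i}) \<le> sum weight F" .
qed

lemma min_conn_weight_hub: "min_conn_weight V edges weight (V - {c}) (sum b (V - {c, d}))"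
  unfolding min_conn_weight_def
proof (intro conjI allI impI)
  let ?F = "star_edges d (V - {c, d})"
  have "subgraph (V - {c}) ?F V edges"
    using d_in c_ne_d by (auto simp: subgraph_def edges_def star_edges_def)
  moreover have "V - {c} - {d} = V - {c, d}" by auto
  then have "connected_graph (V - {c}) ?F"
    using connected_graph_star[of d "V - {c}"] d_in c_ne_d by simp
  moreover have "sum weight ?F = sum b (V - {c, d})" by (simp add: sum_weight_star_d)
  ultimately show "\<exists>S F. subgraph S F V edges \<and> connected_graph S F \<and> V - {c} \<subseteq> S
      \<and> sum weight F = sum b (V - {c, d})" by blast
next
  fix S F assume SF: "subgraph S F V edges \<and> connected_graph S F \<and> V - {c} \<subseteq> S"
  then have S: "S \<subseteq> V" "F \<subseteq> edges" "\<forall>e\<in>F. e \<subseteq> S" by (auto simp: subgraph_def)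
  show "sum b (V - {c, d}) \<le> sum weight F"
  proof (cases "c \<in> S")
    case True
    then have "S - {c} = V - {c}" using SF S(1) by auto
    then have "sum a (V - {c}) \<le> sum weight F" using sum_a_le_weight[OF _ _ True] SF by auto
    then show ?thesis using sum_b_le_sum_a by linarith
  next
    case False
    then have "S = V - {c}" using SF S(1) by auto
    have "b k \<le> weight e" if "e \<in> F" "k \<in> e" "k \<noteq> d" for e k
    proof -
      have "e \<in> edges" "c \<notin> e" using that(1) S(2,3) False by auto
      then obtain j where "j \<in> V - {c, d}" "e = {d, j}" by (cases rule: edgesE) auto
      then show ?thesis using that(2,3) weight_star_d[of j] by auto
    qed
    then have "sum b (S - {d}) \<le> sum weight F"
      using SF S finite_subset[OF _ finite_V] pos_weighted \<open>S = V - {c}\<close> d_in c_ne_d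
      by (intro connected_graph_sum_le_weight)
        (auto simp: pos_weighted_graph_def intro: less_imp_le)
    moreover have "S - {d} = V - {c, d}" using \<open>S = V - {c}\<close> by auto
    ultimately show ?thesis by simp
  qed
qed

end

lemma hub_weight_sums:
  fixes D :: "'a \<Rightarrow> real"
  assumes "finite V" "3 \<le> card V" "c \<in> V"
  defines "T \<equiv> sum D (V - {c}) / (real (card V) - 2)"
  shows "(\<Sum>j\<in>V - {c}. T - D j) = T"
    and "i \<in> V - {c} \<Longrightarrow> (\<Sum>j\<in>V - {c, i}. T - D j) = D i"
    and "d \<in> V - {c} \<Longrightarrow> (\<Sum>j\<in>V - {c, d}. T - D j + (D c - D d) / (real (card V) - 2)) = D c"
proof -
  have N: "real (card V) - 2 \<noteq> 0" using assms(2) by simp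
  have "(\<Sum>j\<in>V - {c}. T - D j) = (real (card V) - 1) * T - sum D (V - {c})"
    using assms(1-3) by (simp add: sum_subtractf of_nat_diff)
  also have "\<dots> = T" using N by (simp add: T_def field_simps)
  finally show "(\<Sum>j\<in>V - {c}. T - D j) = T" .
  show leaf: "(\<Sum>j\<in>V - {c, i}. T - D j) = D i" if "i \<in> V - {c}" for i
  proof -
    have "V - {c} - {i} = V - {c, i}" by auto
    then have "(\<Sum>j\<in>V - {c}. T - D j) = (T - D i) + (\<Sum>j\<in>V - {c, i}. T - D j)"
      using assms(1) that sum.remove[of "V - {c}" i "\<lambda>j. T - D j"] by simp
    with \<open>(\<Sum>j\<in>V - {c}. T - D j) = T\<close> show ?thesis by simp
  qed
  assume d: "d \<in> V - {c}"
  then have "card {c, d} = 2" by auto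
  then have "real (card (V - {c, d})) = real (card V) - 2"
    using assms(1-3) d by (simp add: card_Diff_subset of_nat_diff)
  then show "(\<Sum>j\<in>V - {c, d}. T - D j + (D c - D d) / (real (card V) - 2)) = D c"
    using leaf[OF d] N by (simp add: sum.distrib)
qed

lemma ex_maximiser:
  fixes D :: "'a \<Rightarrow> 'b::linorder"
  assumes "finite A" "A \<noteq> {}"
  shows "\<exists>c\<in>A. \<forall>j\<in>A. D j \<le> D c"
proof -
  have "Max (D ` A) \<in> D ` A" using assms by (intro Max_in) auto
  then obtain c where "c \<in> A" "D c = Max (D ` A)" by (metis imageE)
  then show ?thesis using assms(1) by (metis Max_ge finite_imageI image_eqI)
qed

lemma ex_maximiser_pair:
  fixes D :: "'a \<Rightarrow> 'b::linorder"
  assumes "finite V" "2 \<le> card V"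
  obtains c d where "c \<in> V" "\<forall>j\<in>V. D j \<le> D c" "d \<in> V - {c}" "\<forall>j\<in>V - {c}. D j \<le> D d"
proof -
  have "V \<noteq> {}" using assms(2) by auto
  then obtain c where c: "c \<in> V" "\<forall>j\<in>V. D j \<le> D c"
    using ex_maximiser[of V D] assms(1) by blast
  have "\<not> V \<subseteq> {c}" using card_mono[of "{c}" V] assms(2) by auto
  then obtain d where "d \<in> V - {c}" "\<forall>j\<in>V - {c}. D j \<le> D d"
    using ex_maximiser[of "V - {c}" D] assms(1) by blast
  with c show thesis by (rule that)
qed

lemma weight_conditions_hub_bounds:
  assumes "3 \<le> card V" "weight_conditions V D" "c \<in> V" "\<And>j. j \<in> V \<Longrightarrow> D j \<le> D c"
  shows "D c \<le> sum D (V - {c}) / (real (card V) - 2)"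
    and "j \<in> V - {c} \<Longrightarrow> D j < sum D (V - {c}) / (real (card V) - 2)"
proof -
  have N: "0 < real (card V) - 2" using assms(1) by simp
  have "finite V" using assms(1) card.infinite by force
  show hub: "D c \<le> sum D (V - {c}) / (real (card V) - 2)"
    using assms(2,3) N by (simp add: weight_conditions_def pos_le_divide_eq mult.commute)
  assume j: "j \<in> V - {c}"
  show "D j < sum D (V - {c}) / (real (card V) - 2)"
  proof (cases "D j < D c")
    case False
    then have "D j = D c" using assms(4) j by force
    moreover have "Max (D ` V) = D c"
      using \<open>finite V\<close> assms(3,4) by (intro Max_eqI) auto
    ultimately have "{c, j} \<subseteq> {i\<in>V. D i = Max (D ` V)}" using assms(3) j by auto
    then have "2 \<le> card {i\<in>V. D i = Max (D ` V)}"
      using \<open>finite V\<close> j card_mono[of "{i\<in>V. D i = Max (D ` V)}" "{c, j}"] by auto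
    then have "(real (card V) - 2) * D c < sum D (V - {c})"
      using assms(2,3) by (simp add: weight_conditions_def)
    then show ?thesis using N \<open>D j = D c\<close> by (simp add: pos_less_divide_eq mult.commute)
  qed (use hub in linarith)
qed

lemma weight_conditions_imp_realisable:
  assumes "3 \<le> card V" "weight_conditions V D"
  shows "realisable V D"
proof -
  have "finite V" using assms(1) card.infinite by force
  then obtain c d where c: "c \<in> V" "\<forall>j\<in>V. D j \<le> D c" and d: "d \<in> V - {c}" "\<forall>j\<in>V - {c}. D j \<le> D d"
    using ex_maximiser_pair[of V D] assms(1) by auto
  define T where "T = sum D (V - {c}) / (real (card V) - 2)"
  define s where "s = (D c - D d) / (real (card V) - 2)"
  have N: "0 < real (card V) - 2" using assms(1) by simp
  note sums = hub_weight_sums[OF \<open>finite V\<close> assms(1) c(1), where D = D, folded T_def]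
  have sum_b: "(\<Sum>j\<in>V - {c, d}. T - D j + s) = D c"
    using sums(3)[OF d(1)] unfolding s_def .
  have bounds: "D c \<le> T" "\<And>j. j \<in> V - {c} \<Longrightarrow> D j < T"
    using weight_conditions_hub_bounds[OF assms c(1)] c(2) unfolding T_def by blast+
  interpret double_star V c d "\<lambda>j. T - D j" "\<lambda>j. T - D j + s"
  proof
    have "0 \<le> s" using c(2) d(1) N by (simp add: s_def)
    then show "T - D j \<le> T - D j + s" for j by simp
    show "0 < T - D j" if "j \<in> V - {c}" for j using bounds(2)[OF that] by simp
    show "T - D d \<le> T - D j + s" if "j \<in> V - {c, d}" for j
      using d(2) that \<open>0 \<le> s\<close> by force
    show "(\<Sum>j\<in>V - {c, d}. T - D j + s) \<le> (\<Sum>j\<in>V - {c}. T - D j)"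
      using sums(1) sum_b bounds(1) by simp
  qed (use \<open>finite V\<close> c(1) d(1) in auto)
  have "min_conn_weight V edges weight (V - {i}) (D i)" if "i \<in> V" for i
  proof (cases "i = c")
    case True
    then show ?thesis using min_conn_weight_hub sum_b by simp
  next
    case False
    then show ?thesis using min_conn_weight_vertex[of i] sums(2)[of i] that by simp
  qed
  then show ?thesis using pos_weighted by (auto simp: realisable_def)
qed

theorem theorem4p1:
  fixes n :: nat and D :: "nat \<Rightarrow> real"
  assumes "n \<ge> 3"
    and "\<forall>i\<in>{1..n}. D i > 0"
  shows "(\<exists>E w. pos_weighted_graph {1..n} E w \<and>
            (\<forall>i\<in>{1..n}. min_conn_weight {1..n} E w ({1..n} - {i}) (D i)))
         \<longleftrightarrow>
         ((\<forall>i\<in>{1..n}. (real n - 2) * D i \<le> (\<Sum>j\<in>{1..n} - {i}. D j)) \<and>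
          (card {i\<in>{1..n}. D i = Max (D ` {1..n})} \<ge> 2 \<longrightarrow>
             (\<forall>i\<in>{1..n}. (real n - 2) * D i < (\<Sum>j\<in>{1..n} - {i}. D j))))"
proof -
  have card: "card {1..n} = n" by simp
  then have "realisable {1..n} D \<longleftrightarrow> weight_conditions {1..n} D"
    using assms(1) realisable_imp_weight_conditions weight_conditions_imp_realisable by metis
  then show ?thesis unfolding realisable_def weight_conditions_def card .
qed

end
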